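(* Let $\mathcal{M}=\langle M,\circ,e\rangle$ be an mge monoid. Then for every $n\ge1$, every equalizable tuple $\langle m_1,\dots,m_n\rangle\in M^n$ has an mge.
   Context: In a monoid $\langle M,\circ,e\rangle$, a tuple $\langle m_1,\dots,m_n\rangle\in M^n$ is equalizable if there is $\langle x_1,\dots,x_n\rangle\in M^n$ (an equalizer) with $m_1x_1=\dots=m_nx_n$; an equalizer is a most general equalizer (mge) if every equalizer has the form $\langle x_1x,\dots,x_nx\rangle$ for some $x\in M$. An mge monoid is a monoid with right cancellation ($ac=bc\Rightarrow a=b$) in which every equalizable pair has an mge. *)

theory Defs
  imports Main
begin

text \<open>Tuples in M^n are represented as functions nat => M, indexed by 0..n-1
  (only the values at indices i < n matter). The monoid is the type-class
  monoid_mult: composition (*), neutral element 1.\<close>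

definition equalizer :: "nat \<Rightarrow> (nat \<Rightarrow> 'a::monoid_mult) \<Rightarrow> (nat \<Rightarrow> 'a) \<Rightarrow> bool" where
  "equalizer n m x \<longleftrightarrow> (\<forall>i<n. \<forall>j<n. m i * x i = m j * x j)"

definition equalizable :: "nat \<Rightarrow> (nat \<Rightarrow> 'a::monoid_mult) \<Rightarrow> bool" where
  "equalizable n m \<longleftrightarrow> (\<exists>x. equalizer n m x)"

definition is_mge :: "nat \<Rightarrow> (nat \<Rightarrow> 'a::monoid_mult) \<Rightarrow> (nat \<Rightarrow> 'a) \<Rightarrow> bool" where
  "is_mge n m x \<longleftrightarrow> equalizer n m x \<and>
     (\<forall>y. equalizer n m y \<longrightarrow> (\<exists>z. \<forall>i<n. y i = x i * z))"

definition right_cancellative :: "'a::monoid_mult itself \<Rightarrow> bool" where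
  "right_cancellative _ \<longleftrightarrow> (\<forall>a b c :: 'a. a * c = b * c \<longrightarrow> a = b)"

definition mge_monoid :: "'a::monoid_mult itself \<Rightarrow> bool" where
  "mge_monoid T \<longleftrightarrow> right_cancellative T \<and>
     (\<forall>m :: nat \<Rightarrow> 'a. equalizable 2 m \<longrightarrow> (\<exists>x. is_mge 2 m x))"

end

theory Submission
  imports Defs
begin

text \<open>Induction on the length: if \<open>x\<close> is an mge of \<open>m\<^sub>1, \<dots>, m\<^sub>n\<close>, with common value
  \<open>a = m\<^sub>1 x\<^sub>1\<close>, then every equalizer of \<open>m\<^sub>1, \<dots>, m\<^sub>n\<^sub>+\<^sub>1\<close> factors as \<open>x\<^sub>i z\<close> on the first
  \<open>n\<close> entries, and \<open>(z, y\<^sub>n\<^sub>+\<^sub>1)\<close> equalizes the pair \<open>(a, m\<^sub>n\<^sub>+\<^sub>1)\<close>. Composing \<open>x\<close> with an mge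
  \<open>w\<close> of that pair therefore gives an mge of the longer tuple.\<close>

definition pair :: "'a \<Rightarrow> 'a \<Rightarrow> nat \<Rightarrow> 'a" where
  "pair a b = (\<lambda>i. if i = 0 then a else b)"

lemma equalizer_pair_iff: "equalizer 2 (pair a b) w \<longleftrightarrow> a * w 0 = b * w 1"
  unfolding equalizer_def pair_def by (auto simp: less_2_cases_iff)

lemma equalizer_Suc_imp: "equalizer (Suc n) m y \<Longrightarrow> equalizer n m y"
  unfolding equalizer_def by simp

lemma is_mge_one: "is_mge 1 m (\<lambda>_. 1)"
  unfolding is_mge_def equalizer_def by auto

lemma is_mge_factor:
  assumes x: "is_mge n m x" and "0 < n" and y: "equalizer (Suc n) m y"
  obtains z where "\<forall>i<n. y i = x i * z" and "equalizer 2 (pair (m 0 * x 0) (m n)) (pair z (y n))"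
proof -
  obtain z where z: "\<forall>i<n. y i = x i * z"
    using x equalizer_Suc_imp[OF y] unfolding is_mge_def by blast
  have "m n * y n = m 0 * y 0" using y \<open>0 < n\<close> unfolding equalizer_def by blast
  also have "\<dots> = m 0 * x 0 * z" using z \<open>0 < n\<close> by (simp add: mult.assoc)
  finally have "equalizer 2 (pair (m 0 * x 0) (m n)) (pair z (y n))"
    unfolding equalizer_pair_iff by (simp add: pair_def)
  with z show thesis by (rule that)
qed

lemma is_mge_Suc:
  assumes x: "is_mge n m x" and "0 < n"
    and w: "is_mge 2 (pair (m 0 * x 0) (m n)) w"
  shows "is_mge (Suc n) m (\<lambda>i. if i < n then x i * w 0 else w 1)"
    (is "is_mge _ _ ?x'")
proof -
  define a where "a = m 0 * x 0"
  have xa: "m i * x i = a" if "i < n" for i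
    using x that \<open>0 < n\<close> unfolding is_mge_def equalizer_def a_def by blast
  have wa: "a * w 0 = m n * w 1"
    using w unfolding is_mge_def equalizer_pair_iff a_def by blast
  have "m i * ?x' i = a * w 0" if "i < Suc n" for i
    using that xa wa by (cases "i < n") (auto simp: mult.assoc[symmetric] less_Suc_eq)
  then have eq: "equalizer (Suc n) m ?x'"
    unfolding equalizer_def by simp
  have "\<exists>v. \<forall>i<Suc n. y i = ?x' i * v" if y: "equalizer (Suc n) m y" for y
  proof -
    obtain z where z: "\<forall>i<n. y i = x i * z"
      and e: "equalizer 2 (pair (m 0 * x 0) (m n)) (pair z (y n))"
      using is_mge_factor[OF x \<open>0 < n\<close> y] .
    obtain v where v: "\<forall>i<2. pair z (y n) i = w i * v"
      using w e unfolding is_mge_def by blast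
    have "z = w 0 * v" using v[rule_format, of 0] by (simp add: pair_def)
    moreover have "y n = w 1 * v" using v[rule_format, of 1] by (simp add: pair_def)
    ultimately have "y i = ?x' i * v" if "i < Suc n" for i
      using that z by (cases "i < n") (auto simp: mult.assoc less_Suc_eq)
    then show ?thesis by blast
  qed
  with eq show ?thesis unfolding is_mge_def by blast
qed

lemma mge_monoid_mge_exists:
  assumes mg: "mge_monoid TYPE('a::monoid_mult)"
  shows "equalizable (Suc k) (m :: nat \<Rightarrow> 'a) \<Longrightarrow> \<exists>x. is_mge (Suc k) m x"
proof (induction k)
  case 0
  show ?case using is_mge_one by fastforce
next
  case (Suc k)
  then obtain y where y: "equalizer (Suc (Suc k)) m y"
    unfolding equalizable_def by blast
  with Suc.IH obtain x where x: "is_mge (Suc k) m x"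
    using equalizer_Suc_imp unfolding equalizable_def by blast
  obtain z where "equalizer 2 (pair (m 0 * x 0) (m (Suc k))) (pair z (y (Suc k)))"
    using is_mge_factor[OF x _ y] by blast
  then obtain w where "is_mge 2 (pair (m 0 * x 0) (m (Suc k))) w"
    using mg unfolding mge_monoid_def equalizable_def by blast
  then show ?case using is_mge_Suc[OF x] by blast
qed

theorem lemma5:
  assumes "mge_monoid TYPE('a::monoid_mult)"
    and "n \<ge> 1"
    and "equalizable n (m :: nat \<Rightarrow> 'a)"
  shows "\<exists>x. is_mge n m x"
  using mge_monoid_mge_exists[OF assms(1)] assms(2,3) by (cases n) auto

end
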